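(* Let $p\ge1$, $m=2p$, $j=\mathrm{diag}(I_p,-I_p)$, $n>0$. Let $A$ be an $n\times n$ matrix with $\det A\neq0$, $S_0=S_0^*$ an $n\times n$ matrix and $\Pi_0$ an $n\times m$ matrix with $AS_0-S_0A^*=i\Pi_0j\Pi_0^*$. Define for $k\ge0$ $$\Pi_{k+1}=\Pi_k+iA^{-1}\Pi_kj,\qquad S_{k+1}=S_k+A^{-1}S_k(A^* )^{-1}+A^{-1}\Pi_k\Pi_k^*(A^* )^{-1}.$$ Suppose $\det S_r\neq0$ for $0\le r\le N$. Put $C_k=I_m+\Pi_k^*S_k^{-1}\Pi_k-\Pi_{k+1}^*S_{k+1}^{-1}\Pi_{k+1}$ for $0\le k<N$, and let $W_k(\lambda)$ be the solution of $W_{k+1}(\lambda)-W_k(\lambda)=-\frac{i}{\lambda}jC_kW_k(\lambda)$ with $W_0(\lambda)=I_m$. Then for $0\le k<N$ $$W_{k+1}(\lambda)=w_A(k+1,\lambda)\Big(I_m-\frac{i}{\lambda}j\Big)^{k+1}w_A(0,\lambda)^{-1},$$ where $w_A(k,\lambda)=I_m-ij\Pi_k^*S_k^{-1}(A-\lambda I_n)^{-1}\Pi_k$.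
   Context: $I_r$ denotes the $r\times r$ identity matrix; $\lambda$ is a complex parameter (the identity holds as meromorphic matrix functions of $\lambda$). *)

theory Defs
  imports "Jordan_Normal_Form.Schur_Decomposition" "Jordan_Normal_Form.Determinant"
begin

definition minv :: "complex mat \<Rightarrow> complex mat" where
  "minv M = (1 / det M) \<cdot>\<^sub>m adj_mat M"

definition jmat :: "nat \<Rightarrow> complex mat" where
  "jmat p = mat (2*p) (2*p) (\<lambda>(a,b). if a = b then (if a < p then 1 else -1) else 0)"

primrec Pi_seq :: "nat \<Rightarrow> complex mat \<Rightarrow> complex mat \<Rightarrow> nat \<Rightarrow> complex mat" where
  "Pi_seq p A Pi0 0 = Pi0"
| "Pi_seq p A Pi0 (Suc k) =
     Pi_seq p A Pi0 k + \<i> \<cdot>\<^sub>m (minv A * Pi_seq p A Pi0 k * jmat p)"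

primrec S_seq :: "nat \<Rightarrow> complex mat \<Rightarrow> complex mat \<Rightarrow> complex mat \<Rightarrow> nat \<Rightarrow> complex mat" where
  "S_seq p A S0 Pi0 0 = S0"
| "S_seq p A S0 Pi0 (Suc k) =
     S_seq p A S0 Pi0 k
     + minv A * S_seq p A S0 Pi0 k * minv (mat_adjoint A)
     + minv A * Pi_seq p A Pi0 k * mat_adjoint (Pi_seq p A Pi0 k) * minv (mat_adjoint A)"

definition C_mat :: "nat \<Rightarrow> complex mat \<Rightarrow> complex mat \<Rightarrow> complex mat \<Rightarrow> nat \<Rightarrow> complex mat" where
  "C_mat p A S0 Pi0 k =
     1\<^sub>m (2*p)
     + mat_adjoint (Pi_seq p A Pi0 k) * minv (S_seq p A S0 Pi0 k) * Pi_seq p A Pi0 k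
     - mat_adjoint (Pi_seq p A Pi0 (Suc k)) * minv (S_seq p A S0 Pi0 (Suc k)) * Pi_seq p A Pi0 (Suc k)"

primrec W_seq :: "nat \<Rightarrow> complex mat \<Rightarrow> complex mat \<Rightarrow> complex mat \<Rightarrow> nat \<Rightarrow> complex \<Rightarrow> complex mat" where
  "W_seq p A S0 Pi0 0 z = 1\<^sub>m (2*p)"
| "W_seq p A S0 Pi0 (Suc k) z =
     W_seq p A S0 Pi0 k z - (\<i> / z) \<cdot>\<^sub>m (jmat p * C_mat p A S0 Pi0 k * W_seq p A S0 Pi0 k z)"

definition wA :: "nat \<Rightarrow> complex mat \<Rightarrow> complex mat \<Rightarrow> complex mat \<Rightarrow> nat \<Rightarrow> complex \<Rightarrow> complex mat" where
  "wA p A S0 Pi0 k z =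
     1\<^sub>m (2*p) - \<i> \<cdot>\<^sub>m (jmat p * mat_adjoint (Pi_seq p A Pi0 k) * minv (S_seq p A S0 Pi0 k)
        * minv (A - z \<cdot>\<^sub>m 1\<^sub>m (dim_row A)) * Pi_seq p A Pi0 k)"

end

theory Submission
  imports Defs
begin

(* Induction on k shows that the S-node identity A S_k - S_k A* = i Pi_k j Pi_k* persists along
   the recursion. Together with (A + A^-1) S_k = S_{k+1} A* + i Pi_{k+1} j Pi_k* it gives
   Pi_{k+1}* S_{k+1}^-1 (A + A^-1) = Pi_k* S_k^-1 A - i C_k j Pi_k* S_k^-1, from which the
   resolvent identity z (A - z)^-1 = A (A - z)^-1 - I yields the intertwining relation
   (I - (i/z) j C_k) w_A(k,z) = w_A(k+1,z) (I - (i/z) j). Hence W_k and w_A(k) (I - (i/z) j)^k w_A(0)^-1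
   satisfy the same recursion with the same initial value. *)

(* The matrix identities are verified in the ring of linear operators on sequences nat => complex,
   on which a matrix of any size acts by zero-padding. There products are associative without
   dimension side conditions, so ring normalization applies; the price is that the identity matrix
   of size k acts only as the projection onto the first k coordinates. *)

definition clinear_seq :: "((nat \<Rightarrow> complex) \<Rightarrow> nat \<Rightarrow> complex) \<Rightarrow> bool" where
  "clinear_seq f \<longleftrightarrow>
     (\<forall>x y. f (\<lambda>i. x i + y i) = (\<lambda>i. f x i + f y i)) \<and> (\<forall>c x. f (\<lambda>i. c * x i) = (\<lambda>i. c * f x i))"

typedef lin_op = "Collect clinear_seq"
  by (rule exI[of _ "\<lambda>x i. 0"]) (simp add: clinear_seq_def)

setup_lifting type_definition_lin_op

lemma clinear_seq_add: "clinear_seq f \<Longrightarrow> f (\<lambda>i. x i + y i) = (\<lambda>i. f x i + f y i)"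
  by (simp add: clinear_seq_def)

lemma clinear_seq_scale: "clinear_seq f \<Longrightarrow> f (\<lambda>i. c * x i) = (\<lambda>i. c * f x i)"
  by (simp add: clinear_seq_def)

instantiation lin_op :: ring_1
begin

lift_definition zero_lin_op :: lin_op is "\<lambda>x i. 0"
  by (simp add: clinear_seq_def)
lift_definition one_lin_op :: lin_op is "\<lambda>x. x"
  by (simp add: clinear_seq_def)
lift_definition plus_lin_op :: "lin_op \<Rightarrow> lin_op \<Rightarrow> lin_op" is "\<lambda>f g x i. f x i + g x i"
  by (simp add: clinear_seq_def algebra_simps)
lift_definition uminus_lin_op :: "lin_op \<Rightarrow> lin_op" is "\<lambda>f x i. - f x i"
  by (simp add: clinear_seq_def algebra_simps)
lift_definition minus_lin_op :: "lin_op \<Rightarrow> lin_op \<Rightarrow> lin_op" is "\<lambda>f g x i. f x i - g x i"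
  by (simp add: clinear_seq_def algebra_simps)
lift_definition times_lin_op :: "lin_op \<Rightarrow> lin_op \<Rightarrow> lin_op" is "\<lambda>f g x. f (g x)"
  by (simp add: clinear_seq_def)

instance
proof
  fix a b c :: lin_op
  show "a * b * c = a * (b * c)" by transfer simp
  show "a + b + c = a + (b + c)" by transfer (simp add: add.assoc)
  show "a + b = b + a" by transfer (simp add: add.commute)
  show "0 + a = a" by transfer simp
  show "- a + a = 0" by transfer simp
  show "a - b = a + - b" by transfer simp
  show "1 * a = a" by transfer simp
  show "a * 1 = a" by transfer simp
  show "(a + b) * c = a * c + b * c" by transfer simp
  show "a * (b + c) = a * b + a * c" by transfer (simp add: clinear_seq_add)
  show "(0::lin_op) \<noteq> 1" by transfer (metis zero_neq_one)
qed

end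

lift_definition scalar_op :: "complex \<Rightarrow> lin_op" is "\<lambda>c x i. c * x i"
  by (simp add: clinear_seq_def algebra_simps)

lemma scalar_op_commute: "f * scalar_op c = scalar_op c * f"
  by transfer (simp add: clinear_seq_scale)

lemma scalar_op_mult: "scalar_op c * scalar_op d = scalar_op (c * d)"
  by transfer (simp add: mult.assoc)

lemma scalar_op_1: "scalar_op 1 = 1"
  by transfer simp

lemma scalar_op_uminus: "scalar_op (- c) = - scalar_op c"
  by transfer simp

lift_definition mat_op :: "complex mat \<Rightarrow> lin_op" is
  "\<lambda>M x i. if i < dim_row M then \<Sum>k<dim_col M. M $$ (i,k) * x k else 0"
  by (simp add: clinear_seq_def fun_eq_iff distrib_left sum.distrib sum_distrib_left mult.left_commute)

lemma mat_op_mult: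
  assumes "dim_col M = dim_row N"
  shows "mat_op (M * N) = mat_op M * mat_op N"
proof (transfer fixing: M N, intro ext)
  fix x :: "nat \<Rightarrow> complex" and i
  have "(\<Sum>l<dim_col N. (\<Sum>k<dim_col M. M $$ (i,k) * N $$ (k,l)) * x l)
      = (\<Sum>k<dim_col M. M $$ (i,k) * (\<Sum>l<dim_col N. N $$ (k,l) * x l))"
    by (simp add: sum_distrib_left sum_distrib_right mult.assoc sum.swap[of _ "{..<dim_col N}"])
  then show "(if i < dim_row (M * N) then \<Sum>k<dim_col (M * N). (M * N) $$ (i,k) * x k else 0)
    = (if i < dim_row M then \<Sum>k<dim_col M. M $$ (i,k) *
        (if k < dim_row N then \<Sum>l<dim_col N. N $$ (k,l) * x l else 0) else 0)"
    using assms by (simp add: scalar_prod_def lessThan_atLeast0)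
qed

lemma mat_op_add:
  "dim_row M = dim_row N \<Longrightarrow> dim_col M = dim_col N \<Longrightarrow> mat_op (M + N) = mat_op M + mat_op N"
  by transfer (auto simp: fun_eq_iff distrib_right sum.distrib)

lemma mat_op_diff:
  "dim_row M = dim_row N \<Longrightarrow> dim_col M = dim_col N \<Longrightarrow> mat_op (M - N) = mat_op M - mat_op N"
  by transfer (auto simp: fun_eq_iff left_diff_distrib sum_subtractf)

lemma mat_op_smult: "mat_op (c \<cdot>\<^sub>m M) = scalar_op c * mat_op M"
  by transfer (auto simp: fun_eq_iff sum_distrib_left mult.assoc)

lemma mat_op_inject:
  assumes "mat_op M = mat_op N" "dim_row M = dim_row N" "dim_col M = dim_col N"
  shows "M = N"
proof (rule eq_matI)
  fix i j assume ij: "i < dim_row N" "j < dim_col N"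
  have "Rep_lin_op (mat_op M) (\<lambda>k. if k = j then 1 else 0) i
      = Rep_lin_op (mat_op N) (\<lambda>k. if k = j then 1 else 0) i"
    using assms(1) by simp
  then show "M $$ (i, j) = N $$ (i, j)"
    using ij assms(2,3) by (simp add: mat_op.rep_eq if_distrib[of "\<lambda>v. _ * v"] cong: if_cong)
qed (use assms in auto)

lemma mat_op_one_left: "dim_row M = k \<Longrightarrow> mat_op (1\<^sub>m k) * mat_op M = mat_op M"
  using mat_op_mult[of "1\<^sub>m k" M] by simp

lemma mat_op_one_right: "dim_col M = k \<Longrightarrow> mat_op M * mat_op (1\<^sub>m k) = mat_op M"
  using mat_op_mult[of M "1\<^sub>m k"] by simp

lemma dim_minv [simp]: "dim_row (minv M) = dim_row M" "dim_col (minv M) = dim_col M"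
  by (simp_all add: minv_def adj_mat_def)

lemma minv_carrier: "M \<in> carrier_mat k k \<Longrightarrow> minv M \<in> carrier_mat k k"
  by auto

lemma minv_left:
  assumes "M \<in> carrier_mat k k" "det M \<noteq> 0"
  shows "minv M * M = 1\<^sub>m k"
proof -
  have "minv M * M = (1 / det M) \<cdot>\<^sub>m (adj_mat M * M)"
    unfolding minv_def using adj_mat(1)[OF assms(1)] assms(1) by (simp add: mult_smult_assoc_mat)
  also have "\<dots> = 1\<^sub>m k"
    using adj_mat(3)[OF assms(1)] assms(2) by (intro eq_matI) simp_all
  finally show ?thesis .
qed

lemma minv_right:
  assumes "M \<in> carrier_mat k k" "det M \<noteq> 0"
  shows "M * minv M = 1\<^sub>m k"
proof -
  have "M * minv M = (1 / det M) \<cdot>\<^sub>m (M * adj_mat M)"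
    unfolding minv_def using adj_mat(1)[OF assms(1)] assms(1) by (simp add: mult_smult_distrib)
  also have "\<dots> = 1\<^sub>m k"
    using adj_mat(2)[OF assms(1)] assms(2) by (intro eq_matI) simp_all
  finally show ?thesis .
qed

lemma mat_adjoint_index:
  assumes "i < dim_col M" "j < dim_row M"
  shows "mat_adjoint M $$ (i,j) = cnj (M $$ (j,i))"
  using assms by (simp add: mat_adjoint_def mat_of_rows_index)

lemma dim_mat_adjoint [simp]:
  "dim_row (mat_adjoint M) = dim_col M" "dim_col (mat_adjoint M) = dim_row M"
  by (simp_all add: mat_adjoint_def)

lemma mat_adjoint_add:
  "dim_row M = dim_row N \<Longrightarrow> dim_col M = dim_col N \<Longrightarrow>
   mat_adjoint (M + N) = mat_adjoint M + mat_adjoint (N :: complex mat)"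
  by (rule eq_matI) (simp_all add: mat_adjoint_index)

lemma mat_adjoint_smult: "mat_adjoint (c \<cdot>\<^sub>m M) = cnj c \<cdot>\<^sub>m mat_adjoint (M :: complex mat)"
  by (rule eq_matI) (simp_all add: mat_adjoint_index)

lemma mat_adjoint_one: "mat_adjoint (1\<^sub>m k) = (1\<^sub>m k :: complex mat)"
  by (rule eq_matI) (simp_all add: mat_adjoint_index)

lemma mat_adjoint_mult:
  assumes "dim_col M = dim_row N"
  shows "mat_adjoint (M * N) = mat_adjoint N * mat_adjoint (M :: complex mat)"
proof (rule eq_matI)
  fix i j assume "i < dim_row (mat_adjoint N * mat_adjoint M)" "j < dim_col (mat_adjoint N * mat_adjoint M)"
  then show "mat_adjoint (M * N) $$ (i,j) = (mat_adjoint N * mat_adjoint M) $$ (i,j)"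
    using assms by (simp add: scalar_prod_def mat_adjoint_index mult.commute)
qed simp_all

lemma det_mat_adjoint:
  assumes "M \<in> carrier_mat k k"
  shows "det (mat_adjoint M) = cnj (det M)"
proof -
  interpret cnj: comm_ring_hom cnj by unfold_locales simp_all
  have "mat_adjoint M = map_mat cnj (transpose_mat M)"
    by (rule eq_matI) (simp_all add: mat_adjoint_index)
  then show ?thesis using det_transpose[OF assms] by simp
qed

lemma minv_eqI:
  assumes M: "M \<in> carrier_mat k k" and X: "X \<in> carrier_mat k k" and XM: "X * M = 1\<^sub>m k"
  shows "minv M = X"
proof -
  have "det X * det M = 1" using det_mult[OF X M] XM by simp
  then have "det M \<noteq> 0" by auto
  have "minv M = (X * M) * minv M" using M by (simp add: XM)
  also have "\<dots> = X * (M * minv M)" using assoc_mult_mat[OF X M minv_carrier[OF M]] .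
  also have "\<dots> = X" using minv_right[OF M \<open>det M \<noteq> 0\<close>] X by simp
  finally show ?thesis .
qed

lemma mat_adjoint_minv:
  assumes "M \<in> carrier_mat k k" "det M \<noteq> 0"
  shows "mat_adjoint (minv M) = minv (mat_adjoint M)"
proof (rule minv_eqI[symmetric])
  show "mat_adjoint (minv M) * mat_adjoint M = 1\<^sub>m k"
    using assms minv_right[OF assms] by (simp add: mat_adjoint_mult[symmetric] mat_adjoint_one)
qed (use assms in auto)

lemma dim_jmat [simp]: "dim_row (jmat p) = 2*p" "dim_col (jmat p) = 2*p"
  by (simp_all add: jmat_def)

lemma mat_adjoint_jmat: "mat_adjoint (jmat p) = jmat p"
  by (rule eq_matI) (simp_all add: mat_adjoint_index jmat_def)

lemma jmat_square: "jmat p * jmat p = 1\<^sub>m (2*p)"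
proof (rule eq_matI)
  fix i j assume ij: "i < dim_row (1\<^sub>m (2*p))" "j < dim_col (1\<^sub>m (2*p))"
  have row: "jmat p $$ (i,k) = (if k = i then (if i < p then 1 else -1) else 0)" if "k < 2*p" for k
    using ij that by (simp add: jmat_def)
  have "(jmat p * jmat p) $$ (i,j) = (\<Sum>k\<in>{0..<2*p}. jmat p $$ (i,k) * jmat p $$ (k,j))"
    using ij by (simp add: scalar_prod_def)
  also have "\<dots> = (\<Sum>k\<in>{0..<2*p}. if k = i then (if i < p then 1 else -1) * jmat p $$ (k,j) else 0)"
    by (rule sum.cong) (simp_all add: row)
  also have "\<dots> = 1\<^sub>m (2*p) $$ (i,j)"
    using ij by (simp add: jmat_def)
  finally show "(jmat p * jmat p) $$ (i,j) = 1\<^sub>m (2*p) $$ (i,j)" .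
qed (simp_all add: jmat_def)

lemma mult_eq_assoc: "(x :: 'a :: semigroup_mult) * y = z \<Longrightarrow> x * (y * w) = z * w"
  by (metis mult.assoc)

lemma mat_op_minv_left:
  "dim_col M = dim_row M \<Longrightarrow> det M \<noteq> 0 \<Longrightarrow> mat_op (minv M) * mat_op M = mat_op (1\<^sub>m (dim_row M))"
  by (metis carrier_matI minv_left mat_op_mult dim_minv(2))

lemma mat_op_minv_right:
  "dim_col M = dim_row M \<Longrightarrow> det M \<noteq> 0 \<Longrightarrow> mat_op M * mat_op (minv M) = mat_op (1\<^sub>m (dim_row M))"
  by (metis carrier_matI minv_right mat_op_mult dim_minv(1))

lemma mat_op_jmat_square: "mat_op (jmat p) * mat_op (jmat p) = mat_op (1\<^sub>m (2*p))"
  using mat_op_mult[of "jmat p" "jmat p"] jmat_square[of p] by simp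

lemmas mat_op_expand = mat_op_mult mat_op_add mat_op_diff mat_op_smult

(* Normal form: sums of right-nested products with the scalar in front. Each rule whose left-hand
   side is a product x * y also comes as x * (y * w) = ..., so that it applies inside such products. *)
lemmas lin_op_normalize = algebra_simps
  scalar_op_mult scalar_op_mult[THEN mult_eq_assoc] scalar_op_1 scalar_op_uminus
  scalar_op_commute[where f = "mat_op M" for M]
  scalar_op_commute[where f = "mat_op M" for M, THEN mult_eq_assoc]
  mat_op_one_left mat_op_one_left[THEN mult_eq_assoc]
  mat_op_one_right mat_op_one_right[THEN mult_eq_assoc]
  mat_op_minv_left mat_op_minv_left[THEN mult_eq_assoc]
  mat_op_minv_right mat_op_minv_right[THEN mult_eq_assoc]
  mat_op_jmat_square mat_op_jmat_square[THEN mult_eq_assoc]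

lemma mat_op_pow:
  assumes "dim_col M = dim_row M"
  shows "mat_op (M ^\<^sub>m k) = mat_op (1\<^sub>m (dim_row M)) * mat_op M ^ k"
proof (induction k)
  case (Suc k)
  then show ?case using assms by (simp add: mat_op_mult mult.assoc power_commutes)
qed simp

(* Keeps Pi_{k+1}, S_{k+1} and W_{k+1} folded, in particular inside minv and mat_adjoint. *)
declare Pi_seq.simps(2) [simp del] S_seq.simps(2) [simp del] W_seq.simps(2) [simp del]

locale S_node =
  fixes p n :: nat and A S0 Pi0 :: "complex mat"
  assumes A_carrier: "A \<in> carrier_mat n n" and det_A: "det A \<noteq> 0"
    and S0_carrier: "S0 \<in> carrier_mat n n" and Pi0_carrier: "Pi0 \<in> carrier_mat n (2*p)"
    and displacement_0: "A * S0 - S0 * mat_adjoint A = \<i> \<cdot>\<^sub>m (Pi0 * jmat p * mat_adjoint Pi0)"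
begin

abbreviation "P \<equiv> Pi_seq p A Pi0"
abbreviation "S \<equiv> S_seq p A S0 Pi0"
abbreviation "J \<equiv> jmat p"
abbreviation "C \<equiv> C_mat p A S0 Pi0"
abbreviation "w \<equiv> wA p A S0 Pi0"
abbreviation "W \<equiv> W_seq p A S0 Pi0"

lemma dim_A [simp]: "dim_row A = n" "dim_col A = n"
  using A_carrier by auto

lemma det_adjoint_A [simp]: "det (mat_adjoint A) \<noteq> 0"
  using det_mat_adjoint[OF A_carrier] det_A by simp

lemma dim_P [simp]: "dim_row (P k) = n" "dim_col (P k) = 2*p"
  using Pi0_carrier by (induction k) (auto simp: Pi_seq.simps(2))

lemma dim_S [simp]: "dim_row (S k) = n" "dim_col (S k) = n"
  using S0_carrier by (induction k) (simp_all add: S_seq.simps(2))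

lemma dim_C [simp]: "dim_row (C k) = 2*p" "dim_col (C k) = 2*p"
  by (simp_all add: C_mat_def)

lemma dim_w [simp]: "dim_row (w k z) = 2*p" "dim_col (w k z) = 2*p"
  by (simp_all add: wA_def)

lemma dim_W [simp]: "dim_row (W k z) = 2*p" "dim_col (W k z) = 2*p"
  by (induction k) (simp_all add: W_seq.simps(2))

lemma adjoint_P_Suc:
  "mat_adjoint (P (Suc k)) = mat_adjoint (P k) + (- \<i>) \<cdot>\<^sub>m (J * (mat_adjoint (P k) * minv (mat_adjoint A)))"
proof -
  have "mat_adjoint (minv A) = minv (mat_adjoint A)"
    using mat_adjoint_minv[OF A_carrier det_A] .
  then show ?thesis
    by (simp add: Pi_seq.simps(2) mat_adjoint_add mat_adjoint_smult mat_adjoint_mult mat_adjoint_jmat)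
qed

lemma displacement: "A * S k - S k * mat_adjoint A = \<i> \<cdot>\<^sub>m (P k * J * mat_adjoint (P k))"
proof (induction k)
  case 0
  show ?case using displacement_0 by simp
next
  case (Suc k)
  let ?D = "\<lambda>k. A * S k - S k * mat_adjoint A"
  have "mat_op (?D (Suc k)) = mat_op (?D k) + mat_op (minv A) * mat_op (?D k) * mat_op (minv (mat_adjoint A))
      + mat_op (P k * mat_adjoint (P k) * minv (mat_adjoint A) - minv A * P k * mat_adjoint (P k))"
    by (simp add: S_seq.simps(2) mat_op_expand lin_op_normalize det_A)
  also have "\<dots> = mat_op (\<i> \<cdot>\<^sub>m (P (Suc k) * J * mat_adjoint (P (Suc k))))"
    unfolding Suc.IH adjoint_P_Suc
    by (simp add: Pi_seq.simps(2) mat_op_expand lin_op_normalize det_A)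
  finally show ?case by (rule mat_op_inject) simp_all
qed

lemma mat_op_displacement:
  "mat_op A * mat_op (S k) = mat_op (S k) * mat_op (mat_adjoint A)
     + scalar_op \<i> * (mat_op (P k) * (mat_op J * mat_op (mat_adjoint (P k))))"
  using arg_cong[OF displacement[of k], of mat_op] by (simp add: mat_op_expand algebra_simps)

lemma A_plus_inverse_S:
  "(A + minv A) * S k = S (Suc k) * mat_adjoint A + \<i> \<cdot>\<^sub>m (P (Suc k) * J * mat_adjoint (P k))"
proof (rule mat_op_inject)
  show "mat_op ((A + minv A) * S k) = mat_op (S (Suc k) * mat_adjoint A + \<i> \<cdot>\<^sub>m (P (Suc k) * J * mat_adjoint (P k)))"
    by (simp add: Pi_seq.simps(2) S_seq.simps(2) mat_op_expand lin_op_normalize det_A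
        mat_op_displacement mat_op_displacement[THEN mult_eq_assoc])
qed simp_all

lemma mat_op_C:
  "mat_op (C k) = mat_op (1\<^sub>m (2*p)) + mat_op (mat_adjoint (P k)) * mat_op (minv (S k)) * mat_op (P k)
     - mat_op (mat_adjoint (P (Suc k))) * mat_op (minv (S (Suc k))) * mat_op (P (Suc k))"
  by (simp add: C_mat_def mat_op_expand)

lemma A_plus_inverse_P: "(A + minv A) * P k = A * P (Suc k) - \<i> \<cdot>\<^sub>m (P (Suc k) * J)"
proof (rule mat_op_inject)
  show "mat_op ((A + minv A) * P k) = mat_op (A * P (Suc k) - \<i> \<cdot>\<^sub>m (P (Suc k) * J))"
    by (simp add: Pi_seq.simps(2) mat_op_expand lin_op_normalize det_A)
qed simp_all

lemma adjoint_P_minv_S_shift: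
  assumes "det (S k) \<noteq> 0" "det (S (Suc k)) \<noteq> 0"
  shows "mat_adjoint (P (Suc k)) * minv (S (Suc k)) * (A + minv A)
       = mat_adjoint (P k) * minv (S k) * A - \<i> \<cdot>\<^sub>m (C k * J * mat_adjoint (P k) * minv (S k))"
    (is "?L = ?R")
proof (rule mat_op_inject)
  have "mat_op ?L * mat_op (S k)
      = mat_op (mat_adjoint (P (Suc k)) * minv (S (Suc k)) * ((A + minv A) * S k))"
    by (simp add: mat_op_expand algebra_simps)
  also have "\<dots> = mat_op (mat_adjoint (P (Suc k)) * minv (S (Suc k))
      * (S (Suc k) * mat_adjoint A + \<i> \<cdot>\<^sub>m (P (Suc k) * J * mat_adjoint (P k))))"
    unfolding A_plus_inverse_S ..
  also have "\<dots> = mat_op ?R * mat_op (S k)"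
    unfolding C_mat_def adjoint_P_Suc
    by (simp add: Pi_seq.simps(2) mat_op_expand lin_op_normalize det_A assms
        mat_op_displacement mat_op_displacement[THEN mult_eq_assoc])
  finally have "mat_op ?L * mat_op (S k) * mat_op (minv (S k)) = mat_op ?R * mat_op (S k) * mat_op (minv (S k))"
    by simp
  then show "mat_op ?L = mat_op ?R"
    by (simp add: mult.assoc mat_op_minv_right assms mat_op_one_right)
qed simp_all

lemma mat_op_resolvent:
  fixes z :: complex
  defines "R \<equiv> mat_op (minv (A - z \<cdot>\<^sub>m 1\<^sub>m n))"
  assumes det_res: "det (A - z \<cdot>\<^sub>m 1\<^sub>m n) \<noteq> 0"
  shows "scalar_op z * R = mat_op A * R - mat_op (1\<^sub>m n)"
    and "R * mat_op A = mat_op A * R"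
    and "R * mat_op (minv A) = mat_op (minv A) * R"
proof -
  let ?a = "mat_op A" and ?b = "mat_op (minv A)" and ?e = "mat_op (1\<^sub>m n)" and ?z = "scalar_op z"
  have "R * (?a - ?z * ?e) = ?e" "(?a - ?z * ?e) * R = ?e"
    using mat_op_minv_left[of "A - z \<cdot>\<^sub>m 1\<^sub>m n"] mat_op_minv_right[of "A - z \<cdot>\<^sub>m 1\<^sub>m n"] det_res
    by (simp_all add: R_def mat_op_expand)
  then show "?z * R = ?a * R - ?e" and ra: "R * ?a = ?a * R"
    by (simp_all add: R_def lin_op_normalize)
  have "R * ?b = (?b * ?a) * R * ?b" by (simp add: R_def lin_op_normalize det_A)
  also have "\<dots> = ?b * (R * ?a) * ?b" by (simp only: ra mult.assoc)
  also have "\<dots> = ?b * R" by (simp add: R_def mult.assoc lin_op_normalize det_A)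
  finally show "R * ?b = ?b * R" .
qed

lemma wA_intertwining:
  assumes det_S: "det (S k) \<noteq> 0" "det (S (Suc k)) \<noteq> 0"
    and z: "z \<noteq> 0" and det_res: "det (A - z \<cdot>\<^sub>m 1\<^sub>m n) \<noteq> 0"
  shows "(1\<^sub>m (2*p) - (\<i>/z) \<cdot>\<^sub>m (J * C k)) * w k z = w (Suc k) z * (1\<^sub>m (2*p) - (\<i>/z) \<cdot>\<^sub>m J)"
    (is "?X = ?Y")
proof (rule mat_op_inject)
  let ?a = "mat_op A" and ?b = "mat_op (minv A)" and ?e = "mat_op (1\<^sub>m n)"
    and ?f = "mat_op (1\<^sub>m (2*p))" and ?j = "mat_op J" and ?c = "mat_op (C k)"
    and ?r = "mat_op (minv (A - z \<cdot>\<^sub>m 1\<^sub>m n))"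
    and ?u = "mat_op (P k)" and ?v = "mat_op (mat_adjoint (P k))" and ?q = "mat_op (minv (S k))"
    and ?u1 = "mat_op (P (Suc k))" and ?v1 = "mat_op (mat_adjoint (P (Suc k)))"
    and ?q1 = "mat_op (minv (S (Suc k)))"
    and ?i = "scalar_op \<i>" and ?z = "scalar_op z"
  note res = mat_op_resolvent(1)[OF det_res]
  note commute = mat_op_resolvent(2,3)[OF det_res] mat_op_resolvent(2,3)[OF det_res, THEN mult_eq_assoc]
  have P_shift: "(?a + ?b) * ?u = ?a * ?u1 - ?i * (?u1 * ?j)"
    using arg_cong[OF A_plus_inverse_P[of k], of mat_op] by (simp add: mat_op_expand)
  have S_shift: "?v1 * ?q1 * (?a + ?b) = ?v * ?q * ?a - ?i * (?c * ?j * ?v * ?q)"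
    using arg_cong[OF adjoint_P_minv_S_shift[OF det_S], of mat_op] by (simp add: mat_op_expand)
  txt \<open>Multiplying by z lets the resolvent identity res eliminate z.\<close>
  have "?z * mat_op ?Y = ?z * ?f - ?i * ?j - ?i * (?j * ?v1 * ?q1 * (?z * ?r) * ?u1) - ?j * ?v1 * ?q1 * ?r * ?u1 * ?j"
    using z by (simp add: wA_def mat_op_expand lin_op_normalize)
  also have "\<dots> = ?z * ?f - ?i * ?j + ?i * (?j * ?v1 * ?q1 * ?u1)
      - ?i * (?j * ?v1 * ?q1 * ?r * (?a * ?u1 - ?i * (?u1 * ?j)))"
    unfolding res by (simp add: lin_op_normalize commute)
  also have "\<dots> = ?z * ?f - ?i * ?j + ?i * (?j * ?v1 * ?q1 * ?u1)
      - ?i * (?j * (?v1 * ?q1 * (?a + ?b)) * ?r * ?u)"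
    unfolding P_shift[symmetric] by (simp add: lin_op_normalize commute)
  also have "\<dots> = ?z * ?f - ?i * ?j + ?i * (?j * ?v1 * ?q1 * ?u1)
      - ?i * (?j * (?v * ?q * ?a - ?i * (?c * ?j * ?v * ?q)) * ?r * ?u)"
    unfolding S_shift ..
  also have "\<dots> = ?z * ?f - ?i * (?j * ?c) - ?j * ?c * ?j * ?v * ?q * ?r * ?u
      - ?i * (?j * ?v * ?q * (?a * ?r - ?e) * ?u)"
    unfolding mat_op_C by (simp add: lin_op_normalize)
  also have "\<dots> = ?z * mat_op ?X"
    unfolding res[symmetric] using z by (simp add: wA_def mat_op_expand lin_op_normalize)
  finally have "scalar_op (1/z) * (?z * mat_op ?X) = scalar_op (1/z) * (?z * mat_op ?Y)"
    by simp
  then show "mat_op ?X = mat_op ?Y"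
    using z by (simp add: mult.assoc[symmetric] scalar_op_mult scalar_op_1)
qed (simp_all add: wA_def)

lemma W_seq_factorization:
  assumes det_S: "\<forall>r \<le> N. det (S r) \<noteq> 0" and z: "z \<noteq> 0"
    and det_res: "det (A - z \<cdot>\<^sub>m 1\<^sub>m n) \<noteq> 0" and det_w0: "det (w 0 z) \<noteq> 0"
    and "k \<le> N"
  shows "W k z = w k z * (1\<^sub>m (2*p) - (\<i>/z) \<cdot>\<^sub>m J) ^\<^sub>m k * minv (w 0 z)"
proof (rule mat_op_inject)
  let ?E = "1\<^sub>m (2*p) - (\<i>/z) \<cdot>\<^sub>m J"
  have E_pow: "mat_op (?E ^\<^sub>m k) = mat_op (1\<^sub>m (2*p)) * mat_op ?E ^ k" for k
    using mat_op_pow[of ?E k] by simp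
  show "mat_op (W k z) = mat_op (w k z * ?E ^\<^sub>m k * minv (w 0 z))"
    using \<open>k \<le> N\<close>
  proof (induction k)
    case 0
    show ?case using det_w0 by (simp add: mat_op_expand lin_op_normalize)
  next
    case (Suc k)
    have "mat_op (W (Suc k) z)
        = mat_op ((1\<^sub>m (2*p) - (\<i>/z) \<cdot>\<^sub>m (J * C k)) * W k z)"
      by (simp add: W_seq.simps(2) mat_op_expand lin_op_normalize)
    also have "\<dots> = mat_op ((1\<^sub>m (2*p) - (\<i>/z) \<cdot>\<^sub>m (J * C k)) * w k z) * mat_op ?E ^ k * mat_op (minv (w 0 z))"
      using Suc by (simp add: mat_op_mult E_pow mult.assoc mat_op_one_right[THEN mult_eq_assoc])
    also have "\<dots> = mat_op (w (Suc k) z * ?E) * mat_op ?E ^ k * mat_op (minv (w 0 z))"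
      using Suc.prems det_S z det_res by (simp add: wA_intertwining)
    also have "\<dots> = mat_op (w (Suc k) z * ?E ^\<^sub>m Suc k * minv (w 0 z))"
      by (simp add: mat_op_mult E_pow mult.assoc power_commutes mat_op_one_right[THEN mult_eq_assoc])
    finally show ?case .
  qed
qed simp_all

end

theorem theorem2p2:
  fixes p n N :: nat and A S0 Pi0 :: "complex mat"
  assumes "p \<ge> 1" and "n > 0"
    and "A \<in> carrier_mat n n" and "det A \<noteq> 0"
    and "S0 \<in> carrier_mat n n" and "mat_adjoint S0 = S0"
    and "Pi0 \<in> carrier_mat n (2*p)"
    and "A * S0 - S0 * mat_adjoint A = \<i> \<cdot>\<^sub>m (Pi0 * jmat p * mat_adjoint Pi0)"
    and "\<forall>r \<le> N. det (S_seq p A S0 Pi0 r) \<noteq> 0"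
  shows "\<forall>k < N. \<forall>z. z \<noteq> 0 \<and> det (A - z \<cdot>\<^sub>m 1\<^sub>m n) \<noteq> 0 \<and> det (wA p A S0 Pi0 0 z) \<noteq> 0 \<longrightarrow>
           W_seq p A S0 Pi0 (Suc k) z =
             wA p A S0 Pi0 (Suc k) z * ((1\<^sub>m (2*p) - (\<i> / z) \<cdot>\<^sub>m jmat p) ^\<^sub>m (Suc k))
             * minv (wA p A S0 Pi0 0 z)"
proof (intro allI impI)
  interpret S_node p n A S0 Pi0
    using assms(3-5,7,8) by unfold_locales
  fix k z
  assume "k < N" and "z \<noteq> 0 \<and> det (A - z \<cdot>\<^sub>m 1\<^sub>m n) \<noteq> 0 \<and> det (wA p A S0 Pi0 0 z) \<noteq> 0"
  then show "W_seq p A S0 Pi0 (Suc k) z =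
      wA p A S0 Pi0 (Suc k) z * ((1\<^sub>m (2*p) - (\<i> / z) \<cdot>\<^sub>m jmat p) ^\<^sub>m (Suc k))
      * minv (wA p A S0 Pi0 0 z)"
    using W_seq_factorization[of N z "Suc k"] assms(9) by simp
qed

end
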